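(* Let $X=X_1\times X_2$ be as in the context. For $j=1,2$ let $-\mathbf{A}_j:\mathrm{dom}(\mathbf{A}_j)\subset X_j\to X_j$ be generators of holomorphic contraction semigroups, and let $\mathbf{B}_1:X_2\to X_1$, $\mathbf{B}_2:X_1\to X_2$ be bounded. Let $M_A>0$ be a constant with $\|t\mathbf{A}_i\mathrm{e}^{-t\mathbf{A}_i}\|\le M_A$ for all $t>0$ and $i=1,2$. Then there is a constant $C_1=C_1(\|\mathbf{B}_1\|,\|\mathbf{B}_2\|)>0$ such that for all $t>0$, $n\in\mathbb{N}$, $k\in\{1,\dots,n\}$ and $\tau=t/n$ we have \[ \|\mathcal{A}\mathcal{T}(\tau)^k\|\le C_1\,\mathrm{e}^{t(\|\mathbf{B}_1\|+\|\mathbf{B}_2\|)}\,(1+\log k)+\frac{M_A}{k\tau}. \]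
   Context: $X=X_1\times X_2$ for Banach spaces $X_1,X_2$, with norm $\|(x,y)\|^2=\|x\|_{X_1}^2+\|y\|_{X_2}^2$. A holomorphic (bounded) semigroup $\mathrm{e}^{-t\mathbf{A}}$ is one with $\mathrm{e}^{-t\mathbf{A}}x\in\mathrm{dom}(\mathbf{A})$ for all $x$, $t>0$ and $\sup_{t>0}\|t\mathbf{A}\mathrm{e}^{-t\mathbf{A}}\|<\infty$. For $\tau\ge0$ set $\mathbf{E}_j(\tau)=\mathrm{e}^{-\tau\mathbf{A}_j}$ and $\mathbf{X}_j(\tau)=\int_0^\tau \mathrm{e}^{-\sigma\mathbf{A}_j}\,\mathrm{d}\sigma\,\mathbf{B}_j$ (strong integral). The split-step operator on $X$ is \[ \mathcal{T}(\tau)=\begin{pmatrix}\mathbf{E}_1(\tau) & \mathbf{X}_1(\tau)\\ \mathbf{X}_2(\tau)\mathbf{E}_1(\tau) & \mathbf{X}_2(\tau)\mathbf{X}_1(\tau)+\mathbf{E}_2(\tau)\end{pmatrix}. \] $\mathcal{A}=\mathrm{diag}(\mathbf{A}_1,\mathbf{A}_2)$ on $\mathrm{dom}(\mathcal{A})=\mathrm{dom}(\mathbf{A}_1)\times\mathrm{dom}(\mathbf{A}_2)$. *)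

theory Defs
  imports "HOL-Analysis.Analysis"
begin

definition c0_semigroup :: "(real \<Rightarrow> 'a::banach \<Rightarrow>\<^sub>L 'a) \<Rightarrow> bool" where
  "c0_semigroup S \<longleftrightarrow>
     S 0 = id_blinfun \<and>
     (\<forall>s t. 0 \<le> s \<longrightarrow> 0 \<le> t \<longrightarrow> S (s + t) = S s o\<^sub>L S t) \<and>
     (\<forall>x. ((\<lambda>t. blinfun_apply (S t) x) \<longlongrightarrow> x) (at_right 0))"

definition is_generator :: "(real \<Rightarrow> 'a::banach \<Rightarrow>\<^sub>L 'a) \<Rightarrow> 'a set \<Rightarrow> ('a \<Rightarrow> 'a) \<Rightarrow> bool" where
  "is_generator S D G \<longleftrightarrow>
     D = {x. \<exists>y. ((\<lambda>h. (blinfun_apply (S h) x - x) /\<^sub>R h) \<longlongrightarrow> y) (at_right 0)} \<and>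
     (\<forall>x\<in>D. ((\<lambda>h. (blinfun_apply (S h) x - x) /\<^sub>R h) \<longlongrightarrow> G x) (at_right 0))"

definition holo_contraction_sg :: "(real \<Rightarrow> 'a::banach \<Rightarrow>\<^sub>L 'a) \<Rightarrow> 'a set \<Rightarrow> ('a \<Rightarrow> 'a) \<Rightarrow> bool" where
  "holo_contraction_sg S D A \<longleftrightarrow>
     c0_semigroup S \<and>
     (\<forall>t\<ge>0. norm (S t) \<le> 1) \<and>
     is_generator S D (\<lambda>x. - A x) \<and>
     (\<forall>t>0. \<forall>x. blinfun_apply (S t) x \<in> D) \<and>
     (\<exists>M. \<forall>t>0. \<forall>x. norm (t *\<^sub>R A (blinfun_apply (S t) x)) \<le> M * norm x)"

definition Xop :: "(real \<Rightarrow> 'a::banach \<Rightarrow>\<^sub>L 'a) \<Rightarrow> ('b::banach \<Rightarrow>\<^sub>L 'a) \<Rightarrow> real \<Rightarrow> 'b \<Rightarrow> 'a" where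
  "Xop S B \<tau> y = integral {0..\<tau>} (\<lambda>\<sigma>. blinfun_apply (S \<sigma>) (blinfun_apply B y))"

text \<open>Split-step operator on X_1 \<times> X_2 (product norm is the l2 norm sqrt(|x|^2+|y|^2)).\<close>
definition splitT :: "(real \<Rightarrow> 'a::banach \<Rightarrow>\<^sub>L 'a) \<Rightarrow> (real \<Rightarrow> 'b::banach \<Rightarrow>\<^sub>L 'b)
    \<Rightarrow> ('b \<Rightarrow>\<^sub>L 'a) \<Rightarrow> ('a \<Rightarrow>\<^sub>L 'b) \<Rightarrow> real \<Rightarrow> 'a \<times> 'b \<Rightarrow> 'a \<times> 'b" where
  "splitT S1 S2 B1 B2 \<tau> z =
     (let x = fst z; y = snd z;
          e1x = blinfun_apply (S1 \<tau>) x
      in (e1x + Xop S1 B1 \<tau> y,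
          Xop S2 B2 \<tau> e1x + Xop S2 B2 \<tau> (Xop S1 B1 \<tau> y) + blinfun_apply (S2 \<tau>) y))"

definition diagA :: "('a \<Rightarrow> 'a) \<Rightarrow> ('b \<Rightarrow> 'b) \<Rightarrow> 'a \<times> 'b \<Rightarrow> 'a \<times> 'b" where
  "diagA A1 A2 z = (A1 (fst z), A2 (snd z))"

end

theory Submission
  imports Defs
begin

text \<open>
  Let \<open>E(s) = diag(exp(-s A\<^sub>1), exp(-s A\<^sub>2))\<close>. One split step is a small perturbation of it,
  \<open>T = E(\<tau>) + R\<close>, where \<open>R\<close> is built from the \<open>X\<^sub>j(\<tau>)\<close>: \<open>\<parallel>R\<parallel> = O(\<tau>)\<close>, while \<open>\<A> R\<close> is
  bounded uniformly in \<open>\<tau>\<close> since \<open>A\<^sub>j X\<^sub>j(\<tau>) = (1 - exp(-\<tau> A\<^sub>j)) B\<^sub>j\<close>. Telescoping gives the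
  discrete Duhamel formula \<open>T\<^sup>k = E(k\<tau>) + (\<Sum>j<k. E((k-1-j)\<tau>) R T\<^sup>j)\<close>, and \<open>\<parallel>T\<parallel> \<le> exp(\<tau>\<beta>)\<close>
  controls the powers \<open>T\<^sup>j\<close>. After applying \<open>\<A>\<close>, the holomorphic smoothing \<open>\<parallel>\<A> E(s)\<parallel> \<le> M/s\<close>
  bounds the first term by \<open>M/(k\<tau>)\<close> and the \<open>j\<close>-th term of the sum by \<open>O(1/(k-j))\<close> (for
  \<open>j = k-1\<close> the bound on \<open>\<A> R\<close> is used instead); the harmonic sum is at most \<open>1 + ln k\<close>.
\<close>

lemma norm_Pair_mono: "norm a \<le> norm x \<Longrightarrow> norm b \<le> norm y \<Longrightarrow> norm (a, b) \<le> norm (x, y)"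
  unfolding norm_Pair by (intro real_sqrt_le_mono add_mono power_mono) auto

lemma norm_Pair_scale_le:
  assumes "norm a \<le> c * norm x" "norm b \<le> c * norm y" "0 \<le> c"
  shows "norm (a, b) \<le> c * norm (x, y)"
proof -
  have "norm (a, b) \<le> norm (c *\<^sub>R x, c *\<^sub>R y)"
    using assms by (intro norm_Pair_mono) simp_all
  also have "\<dots> = c * norm (x, y)"
    using assms(3) by (metis abs_of_nonneg norm_scaleR scaleR_Pair)
  finally show ?thesis .
qed

lemma norm_Pair_add_left_le:
  assumes "norm a \<le> norm x" "norm b \<le> c * norm y" "0 \<le> c"
  shows "norm (a + b, y) \<le> (1 + c) * norm (x, y)"
proof -
  have "(a + b, y) = (a, y) + (b, 0)"
    by simp
  then have "norm (a + b, y) \<le> norm (a, y) + norm b"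
    using norm_triangle_ineq[of "(a, y)" "(b, 0)"] by (simp add: norm_Pair)
  also have "\<dots> \<le> norm (x, y) + c * norm (x, y)"
  proof (rule add_mono)
    show "norm (a, y) \<le> norm (x, y)"
      using assms(1) by (rule norm_Pair_mono) simp
    have "c * norm y \<le> c * norm (x, y)"
      using norm_snd_le assms(3) by (rule mult_left_mono)
    then show "norm b \<le> c * norm (x, y)"
      using assms(2) by linarith
  qed
  finally show ?thesis
    by (simp add: algebra_simps)
qed

lemma norm_Pair_add_right_le:
  assumes "norm a \<le> norm y" "norm b \<le> c * norm x" "0 \<le> c"
  shows "norm (x, a + b) \<le> (1 + c) * norm (x, y)"
  using norm_Pair_add_left_le[OF assms] norm_commute[of x "a + b"] norm_commute[of x y] by simp

lemma integral_right_difference_quotient: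
  fixes f :: "real \<Rightarrow> 'a::banach"
  assumes "continuous_on {a..b} f" "a \<le> x" "x < b"
  shows "((\<lambda>h. (integral {a..x+h} f - integral {a..x} f) /\<^sub>R h) \<longlongrightarrow> f x) (at_right 0)"
proof -
  let ?F = "\<lambda>u. integral {a..u} f"
  have "(?F has_vector_derivative f x) (at x within {x..b})"
    using integral_has_vector_derivative[OF assms(1), of x] assms(2,3)
    by (auto intro: has_vector_derivative_within_subset)
  then have "((\<lambda>u. (1 / norm (u - x)) *\<^sub>R (?F u - (?F x + (u - x) *\<^sub>R f x))) \<longlongrightarrow> 0) (at_right x)"
    using assms(3) by (simp add: has_vector_derivative_def has_derivative_within at_within_Icc_at_right)
  then have "((\<lambda>h. (1 / norm h) *\<^sub>R (?F (x + h) - (?F x + h *\<^sub>R f x))) \<longlongrightarrow> 0) (at_right 0)"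
    by (simp add: filterlim_at_right_to_0[of _ _ x] add.commute)
  then have "((\<lambda>h. (1 / norm h) *\<^sub>R (?F (x + h) - (?F x + h *\<^sub>R f x)) + f x) \<longlongrightarrow> f x) (at_right 0)"
    using tendsto_add[OF _ tendsto_const[of "f x"]] by fastforce
  then show ?thesis
    by (rule Lim_transform_eventually)
      (auto simp: eventually_at_right_field scaleR_diff_right scaleR_add_right divide_inverse_commute
        intro!: exI[of _ 1])
qed

lemma is_generator_tendsto:
  "is_generator S D G \<Longrightarrow> x \<in> D \<Longrightarrow> ((\<lambda>h. (S h x - x) /\<^sub>R h) \<longlongrightarrow> G x) (at_right 0)"
  unfolding is_generator_def by blast

lemma is_generator_eqI:
  assumes "is_generator S D G" "((\<lambda>h. (S h x - x) /\<^sub>R h) \<longlongrightarrow> y) (at_right 0)"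
  shows "x \<in> D" "G x = y"
proof -
  show "x \<in> D"
    using assms unfolding is_generator_def by blast
  with assms(1) have "((\<lambda>h. (S h x - x) /\<^sub>R h) \<longlongrightarrow> G x) (at_right 0)"
    by (rule is_generator_tendsto)
  then show "G x = y"
    using assms(2) tendsto_unique[OF trivial_limit_at_right_real] by blast
qed

lemma is_generator_add:
  assumes "is_generator S D G" "x \<in> D" "y \<in> D"
  shows "x + y \<in> D" "G (x + y) = G x + G y"
proof -
  have "((\<lambda>h. (S h x - x) /\<^sub>R h + (S h y - y) /\<^sub>R h) \<longlongrightarrow> G x + G y) (at_right 0)"
    using assms by (intro tendsto_add is_generator_tendsto)
  then have "((\<lambda>h. (S h (x + y) - (x + y)) /\<^sub>R h) \<longlongrightarrow> G x + G y) (at_right 0)"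
    by (simp add: blinfun.add_right algebra_simps)
  from is_generator_eqI[OF assms(1) this] show "x + y \<in> D" "G (x + y) = G x + G y" .
qed

lemma is_generator_sum:
  assumes "is_generator S D G" "\<And>j. j \<in> J \<Longrightarrow> f j \<in> D"
  shows "sum f J \<in> D" "G (sum f J) = (\<Sum>j\<in>J. G (f j))"
proof -
  have "((\<lambda>h. \<Sum>j\<in>J. (S h (f j) - f j) /\<^sub>R h) \<longlongrightarrow> (\<Sum>j\<in>J. G (f j))) (at_right 0)"
    using assms by (intro tendsto_sum is_generator_tendsto)
  then have "((\<lambda>h. (S h (sum f J) - sum f J) /\<^sub>R h) \<longlongrightarrow> (\<Sum>j\<in>J. G (f j))) (at_right 0)"
    by (simp add: blinfun.sum_right sum_subtractf flip: scaleR_sum_right)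
  from is_generator_eqI[OF assms(1) this]
  show "sum f J \<in> D" "G (sum f J) = (\<Sum>j\<in>J. G (f j))" .
qed

locale contraction_semigroup =
  fixes S :: "real \<Rightarrow> 'a::banach \<Rightarrow>\<^sub>L 'a" and D :: "'a set" and G :: "'a \<Rightarrow> 'a"
  assumes c0: "c0_semigroup S"
    and contractive: "\<And>t. 0 \<le> t \<Longrightarrow> norm (S t) \<le> 1"
    and generator: "is_generator S D G"
begin

lemma semigroup_zero: "S 0 = id_blinfun"
  and semigroup_add: "0 \<le> s \<Longrightarrow> 0 \<le> t \<Longrightarrow> S (s + t) = S s o\<^sub>L S t"
  and strongly_continuous: "((\<lambda>t. S t x) \<longlongrightarrow> x) (at_right 0)"
  using c0 unfolding c0_semigroup_def by auto

lemma norm_apply_le: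
  assumes "0 \<le> t"
  shows "norm (S t x) \<le> norm x"
proof -
  have "norm (S t x) \<le> norm (S t) * norm x"
    by (rule norm_blinfun)
  also have "\<dots> \<le> norm x"
    using contractive[OF assms] by (simp add: mult_left_le_one_le)
  finally show ?thesis .
qed

lemma norm_orbit_diff_le:
  assumes "0 \<le> s" "0 \<le> t"
  shows "norm (S s x - S t x) \<le> norm (S \<bar>s - t\<bar> x - x)"
proof -
  have shift: "norm (S (r + h) x - S r x) \<le> norm (S h x - x)" if "0 \<le> r" "0 \<le> h" for r h
  proof -
    have "S (r + h) x - S r x = S r (S h x - x)"
      using semigroup_add[OF that] by (simp add: blinfun.diff_right)
    then show ?thesis
      using norm_apply_le[OF that(1)] by simp
  qed
  show ?thesis
  proof (cases "t \<le> s")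
    case True
    then show ?thesis using shift[of t "s - t"] assms by simp
  next
    case False
    then show ?thesis using shift[of s "t - s"] assms by (simp add: norm_minus_commute)
  qed
qed

lemma orbit_continuous: "continuous_on {0..} (\<lambda>t. S t x)"
  unfolding continuous_on_def
proof
  fix t :: real assume t: "t \<in> {0..}"
  have "((\<lambda>h. S h x - x) \<longlongrightarrow> 0) (at_right 0)"
    using strongly_continuous by (rule LIM_zero)
  then have "((\<lambda>h. norm (S h x - x)) \<longlongrightarrow> 0) (at_right 0)"
    by (rule tendsto_norm_zero)
  moreover have "filterlim (\<lambda>s. \<bar>s - t\<bar>) (at_right 0) (at t within {0..})"
  proof (unfold filterlim_at, intro conjI)
    show "\<forall>\<^sub>F s in at t within {0..}. \<bar>s - t\<bar> \<in> {0<..} \<and> \<bar>s - t\<bar> \<noteq> 0"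
      unfolding eventually_at_filter by (rule always_eventually) simp
    show "((\<lambda>s. \<bar>s - t\<bar>) \<longlongrightarrow> 0) (at t within {0..})"
      by (intro tendsto_rabs_zero LIM_zero tendsto_ident_at)
  qed
  ultimately have "((\<lambda>s. norm (S \<bar>s - t\<bar> x - x)) \<longlongrightarrow> 0) (at t within {0..})"
    by (rule filterlim_compose)
  moreover have "\<forall>\<^sub>F s in at t within {0..}. norm (S s x - S t x) \<le> norm (S \<bar>s - t\<bar> x - x)"
    unfolding eventually_at_filter
    by (intro always_eventually allI impI norm_orbit_diff_le) (use t in auto)
  ultimately have "((\<lambda>s. S s x - S t x) \<longlongrightarrow> 0) (at t within {0..})"
    by (rule Lim_null_comparison[rotated])
  then show "((\<lambda>s. S s x) \<longlongrightarrow> S t x) (at t within {0..})"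
    by (rule LIM_zero_cancel)
qed

lemma orbit_continuous_on_interval: "continuous_on {0..\<tau>} (\<lambda>t. S t x)"
  by (rule continuous_on_subset[OF orbit_continuous]) auto

lemma orbit_integrable: "(\<lambda>t. S t x) integrable_on {0..\<tau>}"
  by (rule integrable_continuous_interval[OF orbit_continuous_on_interval])

lemma norm_orbit_integral_le:
  assumes "0 \<le> \<tau>"
  shows "norm (integral {0..\<tau>} (\<lambda>t. S t x)) \<le> \<tau> * norm x"
proof -
  have "norm (integral {0..\<tau>} (\<lambda>t. S t x)) \<le> norm x * (\<tau> - 0)"
    using assms orbit_continuous_on_interval by (rule integral_bound) (simp add: norm_apply_le)
  then show ?thesis
    by (simp add: mult.commute)
qed

lemma orbit_integral_shift:
  assumes "0 < h" "0 \<le> \<tau>"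
  shows "S h (integral {0..\<tau>} (\<lambda>t. S t x))
    = integral {0..\<tau> + h} (\<lambda>t. S t x) - integral {0..h} (\<lambda>t. S t x)"
proof -
  have "S h (integral {0..\<tau>} (\<lambda>t. S t x)) = integral {0..\<tau>} (\<lambda>t. S h (S t x))"
    by (rule integral_blinfun_apply[symmetric]) (rule orbit_integrable)
  also have "\<dots> = integral {0..\<tau>} (\<lambda>t. S (t + h) x)"
  proof (rule integral_cong)
    fix t assume "t \<in> {0..\<tau>}"
    then have "S (h + t) = S h o\<^sub>L S t"
      using assms by (intro semigroup_add) auto
    then show "S h (S t x) = S (t + h) x"
      by (metis add.commute blinfun_apply_blinfun_compose)
  qed
  also have "\<dots> = integral {h..\<tau> + h} (\<lambda>t. S t x)"
    using integral_shift_real_ivl[where a = h and b = "\<tau> + h" and c = h and f = "\<lambda>t. S t x"]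
    by simp
  also have "\<dots> = integral {0..\<tau> + h} (\<lambda>t. S t x) - integral {0..h} (\<lambda>t. S t x)"
    using Henstock_Kurzweil_Integration.integral_combine[of 0 h "\<tau> + h", OF _ _ orbit_integrable] assms
    by (simp add: algebra_simps)
  finally show ?thesis .
qed

lemma orbit_integral_generator:
  assumes "0 \<le> \<tau>"
  shows "integral {0..\<tau>} (\<lambda>t. S t x) \<in> D" "G (integral {0..\<tau>} (\<lambda>t. S t x)) = S \<tau> x - x"
proof -
  define F where "F u = integral {0..u} (\<lambda>t. S t x)" for u
  have quotient: "((\<lambda>h. (F (s + h) - F s) /\<^sub>R h) \<longlongrightarrow> S s x) (at_right 0)" if "0 \<le> s" for s
    unfolding F_def using orbit_continuous_on_interval[of "s + 1"] that
    by (rule integral_right_difference_quotient) simp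
  have shift: "S h (F \<tau>) = F (\<tau> + h) - F h" if "0 < h" for h
    unfolding F_def using that assms by (rule orbit_integral_shift)
  have "((\<lambda>h. (F (\<tau> + h) - F \<tau>) /\<^sub>R h - (F (0 + h) - F 0) /\<^sub>R h) \<longlongrightarrow> S \<tau> x - x) (at_right 0)"
    using tendsto_diff[OF quotient[OF assms] quotient[of 0]] by (simp add: semigroup_zero)
  then have "((\<lambda>h. (S h (F \<tau>) - F \<tau>) /\<^sub>R h) \<longlongrightarrow> S \<tau> x - x) (at_right 0)"
    by (rule Lim_transform_eventually)
      (auto simp: eventually_at_right_field shift F_def[of 0] algebra_simps intro!: exI[of _ 1])
  from is_generator_eqI[OF generator this]
  show "integral {0..\<tau>} (\<lambda>t. S t x) \<in> D" "G (integral {0..\<tau>} (\<lambda>t. S t x)) = S \<tau> x - x"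
    unfolding F_def by simp_all
qed

lemma Xop_add: "Xop S B \<tau> (a + b) = Xop S B \<tau> a + Xop S B \<tau> b"
  unfolding Xop_def by (simp add: blinfun.add_right integral_add orbit_integrable)

lemma norm_Xop_le:
  assumes "0 \<le> \<tau>"
  shows "norm (Xop S B \<tau> y) \<le> \<tau> * norm B * norm y"
proof -
  have "norm (Xop S B \<tau> y) \<le> \<tau> * norm (B y)"
    unfolding Xop_def using assms by (rule norm_orbit_integral_le)
  also have "\<dots> \<le> \<tau> * (norm B * norm y)"
    using assms by (intro mult_left_mono norm_blinfun)
  finally show ?thesis
    by (simp add: mult.assoc)
qed

lemma Xop_in_domain: "0 \<le> \<tau> \<Longrightarrow> Xop S B \<tau> y \<in> D"
  unfolding Xop_def by (rule orbit_integral_generator)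

lemma norm_generator_Xop_le:
  assumes "0 \<le> \<tau>"
  shows "norm (G (Xop S B \<tau> y)) \<le> 2 * norm B * norm y"
proof -
  have "norm (G (Xop S B \<tau> y)) = norm (S \<tau> (B y) - B y)"
    unfolding Xop_def using assms by (simp add: orbit_integral_generator)
  also have "\<dots> \<le> norm (S \<tau> (B y)) + norm (B y)"
    by (rule norm_triangle_ineq4)
  also have "\<dots> \<le> 2 * norm (B y)"
    using norm_apply_le[OF assms] by simp
  also have "\<dots> \<le> 2 * (norm B * norm y)"
    by (simp add: norm_blinfun)
  finally show ?thesis
    by (simp add: mult.assoc)
qed

end

lemma holo_contraction_sg_imp_contraction_semigroup:
  "holo_contraction_sg S D A \<Longrightarrow> contraction_semigroup S D (\<lambda>x. - A x)"
  unfolding holo_contraction_sg_def contraction_semigroup_def by blast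

lemma holo_contraction_sg_apply_in_domain: "holo_contraction_sg S D A \<Longrightarrow> 0 < t \<Longrightarrow> S t x \<in> D"
  unfolding holo_contraction_sg_def by blast

lemma sum_inverse_diff_le_one_plus_ln:
  assumes "1 \<le> k"
  shows "(\<Sum>j<k. 1 / real (k - j)) \<le> 1 + ln (real k)"
proof -
  have "(\<Sum>j<k. 1 / real (k - j)) = (\<Sum>i<k. inverse (real (Suc i)))"
    by (subst sum.nat_diff_reindex[symmetric]) (auto intro!: sum.cong simp: Suc_diff_Suc divide_inverse)
  also have "\<dots> = harm k"
    by (simp add: harm_altdef)
  also have "\<dots> \<le> 1 + ln (real k)"
    using euler_mascheroni_sequence_decreasing[of 1 k] assms by (simp add: harm_def)
  finally show ?thesis .
qed

lemma divide_le_double_divide_plus_one: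
  fixes a m :: real
  assumes "1 \<le> m" "0 \<le> a"
  shows "a / m \<le> 2 * a / (m + 1)"
  using assms mult_left_mono[OF assms] by (simp add: field_simps)

locale split_step =
  fixes S1 :: "real \<Rightarrow> 'a::banach \<Rightarrow>\<^sub>L 'a" and D1 :: "'a set" and A1 :: "'a \<Rightarrow> 'a"
    and S2 :: "real \<Rightarrow> 'b::banach \<Rightarrow>\<^sub>L 'b" and D2 :: "'b set" and A2 :: "'b \<Rightarrow> 'b"
    and B1 :: "'b \<Rightarrow>\<^sub>L 'a" and B2 :: "'a \<Rightarrow>\<^sub>L 'b" and \<tau> :: real and M :: real
  assumes holo1: "holo_contraction_sg S1 D1 A1" and holo2: "holo_contraction_sg S2 D2 A2"
    and tau_pos: "0 < \<tau>" and M_nonneg: "0 \<le> M"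
    and smoothing1: "\<And>t x. 0 < t \<Longrightarrow> norm (t *\<^sub>R A1 (S1 t x)) \<le> M * norm x"
    and smoothing2: "\<And>t y. 0 < t \<Longrightarrow> norm (t *\<^sub>R A2 (S2 t y)) \<le> M * norm y"
begin

sublocale sg1: contraction_semigroup S1 D1 "\<lambda>x. - A1 x"
  using holo1 by (rule holo_contraction_sg_imp_contraction_semigroup)

sublocale sg2: contraction_semigroup S2 D2 "\<lambda>x. - A2 x"
  using holo2 by (rule holo_contraction_sg_imp_contraction_semigroup)

abbreviation T :: "'a \<times> 'b \<Rightarrow> 'a \<times> 'b" where "T \<equiv> splitT S1 S2 B1 B2 \<tau>"

abbreviation \<beta> :: real where "\<beta> \<equiv> norm B1 + norm B2"

lemma diagA_add:
  assumes "v \<in> D1 \<times> D2" "w \<in> D1 \<times> D2"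
  shows "v + w \<in> D1 \<times> D2" "diagA A1 A2 (v + w) = diagA A1 A2 v + diagA A1 A2 w"
  using assms is_generator_add[OF sg1.generator, of "fst v" "fst w"]
    is_generator_add[OF sg2.generator, of "snd v" "snd w"]
  by (auto simp: diagA_def mem_Times_iff) (metis add_uminus_conv_diff minus_add_distrib neg_equal_iff_equal)+

lemma diagA_sum:
  assumes "\<And>j. j \<in> J \<Longrightarrow> f j \<in> D1 \<times> D2"
  shows "sum f J \<in> D1 \<times> D2" "diagA A1 A2 (sum f J) = (\<Sum>j\<in>J. diagA A1 A2 (f j))"
  using assms is_generator_sum[OF sg1.generator, of J "\<lambda>j. fst (f j)"]
    is_generator_sum[OF sg2.generator, of J "\<lambda>j. snd (f j)"]
  by (auto simp: diagA_def mem_Times_iff fst_sum snd_sum sum_negf sum_prod minus_equation_iff)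

definition E :: "real \<Rightarrow> 'a \<times> 'b \<Rightarrow> 'a \<times> 'b" where
  "E s w = (S1 s (fst w), S2 s (snd w))"

lemma E_zero: "E 0 w = w"
  by (simp add: E_def sg1.semigroup_zero sg2.semigroup_zero)

lemma E_semigroup: "0 \<le> s \<Longrightarrow> 0 \<le> r \<Longrightarrow> E s (E r w) = E (s + r) w"
  by (simp add: E_def sg1.semigroup_add sg2.semigroup_add)

lemma E_add_right: "E s (v + w) = E s v + E s w"
  by (simp add: E_def blinfun.add_right)

lemma E_sum_right: "E s (sum f J) = (\<Sum>j\<in>J. E s (f j))"
  by (simp add: E_def fst_sum snd_sum blinfun.sum_right sum_prod)

lemma E_in_domain: "0 < s \<Longrightarrow> E s w \<in> D1 \<times> D2"
  using holo_contraction_sg_apply_in_domain[OF holo1] holo_contraction_sg_apply_in_domain[OF holo2]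
  by (simp add: E_def)

lemma norm_diagA_E_le:
  assumes "0 < s"
  shows "norm (diagA A1 A2 (E s w)) \<le> M / s * norm w"
proof -
  have "norm (A1 (S1 s x)) \<le> M / s * norm x" for x
    using smoothing1[OF assms, of x] assms by (simp add: field_simps)
  moreover have "norm (A2 (S2 s y)) \<le> M / s * norm y" for y
    using smoothing2[OF assms, of y] assms by (simp add: field_simps)
  ultimately have "norm (diagA A1 A2 (E s w)) \<le> M / s * norm (fst w, snd w)"
    unfolding E_def diagA_def using assms M_nonneg by (intro norm_Pair_scale_le) auto
  then show ?thesis
    by simp
qed

definition first_substep :: "'a \<times> 'b \<Rightarrow> 'a \<times> 'b" where
  "first_substep w = (S1 \<tau> (fst w) + Xop S1 B1 \<tau> (snd w), snd w)"

definition second_substep :: "'a \<times> 'b \<Rightarrow> 'a \<times> 'b" where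
  "second_substep w = (fst w, Xop S2 B2 \<tau> (fst w) + S2 \<tau> (snd w))"

lemma splitT_eq_substeps: "T w = second_substep (first_substep w)"
  by (simp add: splitT_def first_substep_def second_substep_def Let_def sg2.Xop_add)

lemma norm_first_substep_le: "norm (first_substep w) \<le> (1 + \<tau> * norm B1) * norm w"
proof -
  have "norm (S1 \<tau> (fst w) + Xop S1 B1 \<tau> (snd w), snd w) \<le> (1 + \<tau> * norm B1) * norm (fst w, snd w)"
    using tau_pos by (intro norm_Pair_add_left_le sg1.norm_apply_le sg1.norm_Xop_le) auto
  then show ?thesis
    by (simp add: first_substep_def)
qed

lemma norm_second_substep_le: "norm (second_substep w) \<le> (1 + \<tau> * norm B2) * norm w"
proof -
  have "norm (fst w, S2 \<tau> (snd w) + Xop S2 B2 \<tau> (fst w)) \<le> (1 + \<tau> * norm B2) * norm (fst w, snd w)"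
    using tau_pos by (intro norm_Pair_add_right_le sg2.norm_apply_le sg2.norm_Xop_le) auto
  then show ?thesis
    by (simp add: second_substep_def add.commute)
qed

lemma norm_splitT_le: "norm (T w) \<le> exp (\<tau> * \<beta>) * norm w"
proof -
  have "norm (T w) \<le> (1 + \<tau> * norm B2) * ((1 + \<tau> * norm B1) * norm w)"
    unfolding splitT_eq_substeps using tau_pos
    by (intro order_trans[OF norm_second_substep_le] mult_left_mono norm_first_substep_le) auto
  also have "\<dots> \<le> exp (\<tau> * norm B2) * (exp (\<tau> * norm B1) * norm w)"
    using tau_pos by (intro mult_mono mult_right_mono exp_ge_add_one_self) auto
  also have "\<dots> = exp (\<tau> * \<beta>) * norm w"
    by (simp add: exp_add[symmetric] algebra_simps)
  finally show ?thesis .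
qed

lemma norm_splitT_pow_le: "norm ((T ^^ j) w) \<le> exp (real j * \<tau> * \<beta>) * norm w"
proof (induction j)
  case 0
  then show ?case by simp
next
  case (Suc j)
  have "norm ((T ^^ Suc j) w) \<le> exp (\<tau> * \<beta>) * norm ((T ^^ j) w)"
    by (simp add: norm_splitT_le)
  also have "\<dots> \<le> exp (\<tau> * \<beta>) * (exp (real j * \<tau> * \<beta>) * norm w)"
    using Suc.IH by (rule mult_left_mono) simp
  also have "\<dots> = exp (real (Suc j) * \<tau> * \<beta>) * norm w"
    by (simp add: exp_add[symmetric] algebra_simps)
  finally show ?case .
qed

definition R :: "'a \<times> 'b \<Rightarrow> 'a \<times> 'b" where
  "R w = (Xop S1 B1 \<tau> (snd w), Xop S2 B2 \<tau> (fst (first_substep w)))"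

lemma splitT_eq_E_plus_R: "T w = E \<tau> w + R w"
  by (simp add: splitT_def E_def R_def first_substep_def Let_def sg2.Xop_add algebra_simps)

lemma norm_coupling_Pair_le:
  assumes "norm p \<le> c * norm B1 * norm (snd w)"
    and "norm q \<le> c * norm B2 * norm (fst (first_substep w))" and "0 \<le> c"
  shows "norm (p, q) \<le> c * \<beta> * exp (\<tau> * \<beta>) * norm w"
proof -
  have "norm (p, q) \<le> c * norm B1 * norm w + c * norm B2 * ((1 + \<tau> * norm B1) * norm w)"
  proof (rule order_trans[OF norm_Pair_le add_mono])
    have "norm (snd w) \<le> norm w"
      using norm_snd_le[where x = "fst w" and y = "snd w"] by simp
    then show "norm p \<le> c * norm B1 * norm w"
      by (meson assms(1,3) mult_left_mono mult_nonneg_nonneg norm_ge_zero order.trans)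
    have "norm (fst (first_substep w)) \<le> norm (first_substep w)"
      using norm_fst_le[where x = "fst (first_substep w)" and y = "snd (first_substep w)"] by simp
    then have "norm (fst (first_substep w)) \<le> (1 + \<tau> * norm B1) * norm w"
      using norm_first_substep_le order.trans by blast
    then show "norm q \<le> c * norm B2 * ((1 + \<tau> * norm B1) * norm w)"
      by (meson assms(2,3) mult_left_mono mult_nonneg_nonneg norm_ge_zero order.trans)
  qed
  also have "\<dots> = c * (norm B1 + norm B2 * (1 + \<tau> * norm B1)) * norm w"
    by (simp add: algebra_simps)
  also have "\<dots> \<le> c * (\<beta> * exp (\<tau> * \<beta>)) * norm w"
  proof (intro mult_left_mono mult_right_mono)
    have "1 + \<tau> * norm B1 \<le> exp (\<tau> * \<beta>)"
      using tau_pos order.trans[OF exp_ge_add_one_self, of "\<tau> * norm B1"] by simp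
    then have "norm B2 * (1 + \<tau> * norm B1) \<le> norm B2 * exp (\<tau> * \<beta>)"
      by (rule mult_left_mono) simp
    moreover have "norm B1 * 1 \<le> norm B1 * exp (\<tau> * \<beta>)"
      using tau_pos by (intro mult_left_mono) simp_all
    ultimately show "norm B1 + norm B2 * (1 + \<tau> * norm B1) \<le> \<beta> * exp (\<tau> * \<beta>)"
      by (simp add: distrib_right)
  qed (use assms(3) in auto)
  finally show ?thesis
    by (simp add: mult.assoc)
qed

lemma norm_R_le: "norm (R w) \<le> \<tau> * \<beta> * exp (\<tau> * \<beta>) * norm w"
  unfolding R_def using tau_pos by (intro norm_coupling_Pair_le sg1.norm_Xop_le sg2.norm_Xop_le) auto

lemma R_in_domain: "R w \<in> D1 \<times> D2"
  unfolding R_def using tau_pos by (simp add: sg1.Xop_in_domain sg2.Xop_in_domain)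

lemma norm_diagA_R_le: "norm (diagA A1 A2 (R w)) \<le> 2 * \<beta> * exp (\<tau> * \<beta>) * norm w"
  unfolding R_def diagA_def
  by (intro norm_coupling_Pair_le)
    (use tau_pos sg1.norm_generator_Xop_le[of \<tau>] sg2.norm_generator_Xop_le[of \<tau>] in simp_all)

lemma splitT_pow_Duhamel:
  "(T ^^ k) z = E (real k * \<tau>) z + (\<Sum>j<k. E (real (k - Suc j) * \<tau>) (R ((T ^^ j) z)))"
proof (induction k)
  case 0
  show ?case
    by (simp add: E_zero)
next
  case (Suc k)
  have "(T ^^ Suc k) z = E \<tau> ((T ^^ k) z) + R ((T ^^ k) z)"
    by (simp add: splitT_eq_E_plus_R)
  also have "E \<tau> ((T ^^ k) z)
      = E (real (Suc k) * \<tau>) z + (\<Sum>j<k. E (real (Suc k - Suc j) * \<tau>) (R ((T ^^ j) z)))"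
  proof -
    have "E \<tau> (E (real (k - Suc j) * \<tau>) v) = E (real (Suc k - Suc j) * \<tau>) v" if "j < k" for j v
    proof -
      have "real (Suc k - Suc j) * \<tau> = \<tau> + real (k - Suc j) * \<tau>"
        using that by (simp add: of_nat_diff algebra_simps)
      then show ?thesis
        using E_semigroup[of \<tau> "real (k - Suc j) * \<tau>" v] tau_pos
        by (metis less_imp_le mult_nonneg_nonneg of_nat_0_le_iff)
    qed
    then show ?thesis
      using tau_pos by (simp add: Suc.IH E_add_right E_sum_right E_semigroup algebra_simps)
  qed
  finally show ?case
    by (simp add: E_zero add.assoc)
qed

lemma exp_norm_splitT_pow_le:
  assumes "j < k"
  shows "exp (\<tau> * \<beta>) * norm ((T ^^ j) z) \<le> exp (real k * \<tau> * \<beta>) * norm z"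
proof -
  have "exp (\<tau> * \<beta>) * norm ((T ^^ j) z) \<le> exp (\<tau> * \<beta>) * (exp (real j * \<tau> * \<beta>) * norm z)"
    by (intro mult_left_mono norm_splitT_pow_le) simp
  also have "\<dots> = exp (real (Suc j) * \<tau> * \<beta>) * norm z"
    by (simp add: exp_add[symmetric] algebra_simps)
  also have "\<dots> \<le> exp (real k * \<tau> * \<beta>) * norm z"
    using assms tau_pos by (intro mult_right_mono) (auto intro!: mult_right_mono)
  finally show ?thesis .
qed

lemma norm_R_splitT_pow_le:
  assumes "j < k"
  shows "norm (R ((T ^^ j) z)) \<le> \<tau> * \<beta> * (exp (real k * \<tau> * \<beta>) * norm z)"
proof -
  have "norm (R ((T ^^ j) z)) \<le> \<tau> * \<beta> * (exp (\<tau> * \<beta>) * norm ((T ^^ j) z))"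
    using norm_R_le by (simp add: mult.assoc)
  also have "\<dots> \<le> \<tau> * \<beta> * (exp (real k * \<tau> * \<beta>) * norm z)"
    using tau_pos by (intro mult_left_mono exp_norm_splitT_pow_le assms) simp
  finally show ?thesis .
qed

lemma norm_diagA_R_splitT_pow_le:
  assumes "j < k"
  shows "norm (diagA A1 A2 (R ((T ^^ j) z))) \<le> 2 * \<beta> * (exp (real k * \<tau> * \<beta>) * norm z)"
proof -
  have "norm (diagA A1 A2 (R ((T ^^ j) z))) \<le> 2 * \<beta> * (exp (\<tau> * \<beta>) * norm ((T ^^ j) z))"
    using norm_diagA_R_le by (simp add: mult.assoc)
  also have "\<dots> \<le> 2 * \<beta> * (exp (real k * \<tau> * \<beta>) * norm z)"
    by (intro mult_left_mono exp_norm_splitT_pow_le assms) simp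
  finally show ?thesis .
qed

lemma Duhamel_term_bound:
  assumes "j < k"
  shows "E (real (k - Suc j) * \<tau>) (R ((T ^^ j) z)) \<in> D1 \<times> D2"
    and "norm (diagA A1 A2 (E (real (k - Suc j) * \<tau>) (R ((T ^^ j) z))))
      \<le> 2 * (1 + M) * \<beta> * (exp (real k * \<tau> * \<beta>) * norm z) / real (k - j)"
proof -
  let ?Z = "exp (real k * \<tau> * \<beta>) * norm z"
  have "0 \<le> \<beta> * ?Z"
    by simp
  show "E (real (k - Suc j) * \<tau>) (R ((T ^^ j) z)) \<in> D1 \<times> D2"
    using R_in_domain E_in_domain tau_pos by (cases "k - Suc j") (simp_all add: E_zero)
  show "norm (diagA A1 A2 (E (real (k - Suc j) * \<tau>) (R ((T ^^ j) z)))) \<le> 2 * (1 + M) * \<beta> * ?Z / real (k - j)"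
  proof (cases "k - Suc j = 0")
    case True
    then have last: "E (real (k - Suc j) * \<tau>) (R ((T ^^ j) z)) = R ((T ^^ j) z)"
      by (simp add: E_zero)
    have "k = Suc j"
      using True assms by simp
    have "norm (diagA A1 A2 (E (real (k - Suc j) * \<tau>) (R ((T ^^ j) z)))) \<le> 2 * (\<beta> * ?Z)"
      unfolding last mult.assoc[of 2 \<beta> ?Z, symmetric] by (rule norm_diagA_R_splitT_pow_le[OF assms])
    also have "\<dots> \<le> 2 * (1 + M) * (\<beta> * ?Z)"
      using \<open>0 \<le> \<beta> * ?Z\<close> M_nonneg by (intro mult_right_mono) simp_all
    finally show ?thesis
      using \<open>k = Suc j\<close> by (simp add: mult.assoc)
  next
    case False
    define m where "m = real (k - Suc j)"
    have "1 \<le> m" and "real (k - j) = m + 1" and "0 < m * \<tau>"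
      using False assms tau_pos by (simp_all add: m_def of_nat_diff)
    have "norm (diagA A1 A2 (E (m * \<tau>) (R ((T ^^ j) z)))) \<le> M / (m * \<tau>) * (\<tau> * (\<beta> * ?Z))"
      using \<open>0 < m * \<tau>\<close> M_nonneg norm_R_splitT_pow_le[OF assms]
      by (intro order.trans[OF norm_diagA_E_le] mult_left_mono) (simp_all add: mult.assoc)
    also have "\<dots> = M * (\<beta> * ?Z) / m"
      using tau_pos by simp
    also have "\<dots> \<le> 2 * (M * (\<beta> * ?Z)) / (m + 1)"
      using \<open>1 \<le> m\<close> \<open>0 \<le> \<beta> * ?Z\<close> M_nonneg by (intro divide_le_double_divide_plus_one) simp_all
    also have "\<dots> \<le> 2 * (1 + M) * (\<beta> * ?Z) / (m + 1)"
      using mult_right_mono[of "2 * M" "2 * (1 + M)" "\<beta> * ?Z"] \<open>0 \<le> \<beta> * ?Z\<close> \<open>1 \<le> m\<close>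
      by (intro divide_right_mono) (simp_all add: mult.assoc)
    finally show ?thesis
      using \<open>real (k - j) = m + 1\<close> by (simp add: m_def mult.assoc)
  qed
qed

lemma splitT_pow_smoothing:
  assumes "1 \<le> k"
  shows "(T ^^ k) z \<in> D1 \<times> D2"
    and "norm (diagA A1 A2 ((T ^^ k) z))
      \<le> 2 * (1 + M) * \<beta> * (exp (real k * \<tau> * \<beta>) * norm z) * (1 + ln (real k))
        + M / (real k * \<tau>) * norm z"
proof -
  define v where "v j = E (real (k - Suc j) * \<tau>) (R ((T ^^ j) z))" for j
  define K where "K = 2 * (1 + M) * \<beta> * (exp (real k * \<tau> * \<beta>) * norm z)"
  have v_in_domain: "v j \<in> D1 \<times> D2" and v_bound: "norm (diagA A1 A2 (v j)) \<le> K / real (k - j)"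
    if "j \<in> {..<k}" for j
    using Duhamel_term_bound[of j k z] that unfolding v_def K_def by simp_all
  have "0 < real k * \<tau>"
    using assms tau_pos by simp
  then have domain: "E (real k * \<tau>) z \<in> D1 \<times> D2" "sum v {..<k} \<in> D1 \<times> D2"
    using E_in_domain diagA_sum(1)[where J = "{..<k}" and f = v] v_in_domain by simp_all
  have Duhamel: "(T ^^ k) z = E (real k * \<tau>) z + sum v {..<k}"
    unfolding v_def by (rule splitT_pow_Duhamel)
  show "(T ^^ k) z \<in> D1 \<times> D2"
    unfolding Duhamel using domain by (rule diagA_add)
  have "diagA A1 A2 ((T ^^ k) z) = diagA A1 A2 (E (real k * \<tau>) z) + (\<Sum>j<k. diagA A1 A2 (v j))"
    using diagA_add(2)[OF domain] diagA_sum(2)[of "{..<k}" v] v_in_domain by (simp add: Duhamel)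
  then have "norm (diagA A1 A2 ((T ^^ k) z))
      \<le> norm (diagA A1 A2 (E (real k * \<tau>) z)) + norm (\<Sum>j<k. diagA A1 A2 (v j))"
    by (simp add: norm_triangle_ineq)
  also have "\<dots> \<le> norm (diagA A1 A2 (E (real k * \<tau>) z)) + (\<Sum>j<k. norm (diagA A1 A2 (v j)))"
    by (intro add_left_mono norm_sum)
  also have "\<dots> \<le> M / (real k * \<tau>) * norm z + (\<Sum>j<k. K * (1 / real (k - j)))"
    using \<open>0 < real k * \<tau>\<close> v_bound by (intro add_mono sum_mono norm_diagA_E_le) simp_all
  also have "\<dots> \<le> M / (real k * \<tau>) * norm z + K * (1 + ln (real k))"
    unfolding sum_distrib_left[symmetric] K_def using M_nonneg
    by (intro add_left_mono mult_left_mono sum_inverse_diff_le_one_plus_ln assms) simp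
  finally show "norm (diagA A1 A2 ((T ^^ k) z))
      \<le> 2 * (1 + M) * \<beta> * (exp (real k * \<tau> * \<beta>) * norm z) * (1 + ln (real k))
        + M / (real k * \<tau>) * norm z"
    by (simp add: K_def)
qed

end

theorem lemma4p1:
  fixes \<beta>1 \<beta>2 :: real and M_A :: real
  assumes "M_A > 0"
  shows "\<exists>C1>0. \<forall>(S1 :: real \<Rightarrow> 'a::banach \<Rightarrow>\<^sub>L 'a) (D1 :: 'a set) (A1 :: 'a \<Rightarrow> 'a)
                  (S2 :: real \<Rightarrow> 'b::banach \<Rightarrow>\<^sub>L 'b) (D2 :: 'b set) (A2 :: 'b \<Rightarrow> 'b)
                  (B1 :: 'b \<Rightarrow>\<^sub>L 'a) (B2 :: 'a \<Rightarrow>\<^sub>L 'b).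
     holo_contraction_sg S1 D1 A1 \<longrightarrow> holo_contraction_sg S2 D2 A2 \<longrightarrow>
     norm B1 = \<beta>1 \<longrightarrow> norm B2 = \<beta>2 \<longrightarrow>
     (\<forall>t>0. \<forall>x. norm (t *\<^sub>R A1 (blinfun_apply (S1 t) x)) \<le> M_A * norm x) \<longrightarrow>
     (\<forall>t>0. \<forall>y. norm (t *\<^sub>R A2 (blinfun_apply (S2 t) y)) \<le> M_A * norm y) \<longrightarrow>
     (\<forall>t>0. \<forall>n::nat. \<forall>k\<in>{1..n}. \<forall>z.
        let \<tau> = t / real n; w = (splitT S1 S2 B1 B2 \<tau> ^^ k) z in
        w \<in> D1 \<times> D2 \<and>
        norm (diagA A1 A2 w) \<le>
          (C1 * exp (t * (norm B1 + norm B2)) * (1 + ln (real k)) + M_A / (real k * \<tau>)) * norm z)"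
proof -
  define C1 where "C1 = 2 * (1 + M_A) * (\<bar>\<beta>1\<bar> + \<bar>\<beta>2\<bar>) + 1"
  have "0 < C1"
    using assms by (simp add: C1_def add_nonneg_pos)
  show ?thesis
  proof (intro exI[of _ C1] conjI \<open>0 < C1\<close> allI impI ballI)
    fix S1 :: "real \<Rightarrow> 'a \<Rightarrow>\<^sub>L 'a" and D1 A1 and S2 :: "real \<Rightarrow> 'b \<Rightarrow>\<^sub>L 'b" and D2 A2
      and B1 :: "'b \<Rightarrow>\<^sub>L 'a" and B2 :: "'a \<Rightarrow>\<^sub>L 'b" and t :: real and n k :: nat and z :: "'a \<times> 'b"
    assume holo: "holo_contraction_sg S1 D1 A1" "holo_contraction_sg S2 D2 A2"
      and norms: "norm B1 = \<beta>1" "norm B2 = \<beta>2"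
      and smoothing: "\<forall>t>0. \<forall>x. norm (t *\<^sub>R A1 (S1 t x)) \<le> M_A * norm x"
        "\<forall>t>0. \<forall>y. norm (t *\<^sub>R A2 (S2 t y)) \<le> M_A * norm y"
      and "0 < t" and k: "k \<in> {1..n}"
    define \<tau> where "\<tau> = t / real n"
    have "0 < \<tau>" and "real k * \<tau> \<le> t"
      using \<open>0 < t\<close> k by (auto simp: \<tau>_def field_simps)
    interpret split_step S1 D1 A1 S2 D2 A2 B1 B2 \<tau> M_A
      using holo \<open>0 < \<tau>\<close> assms smoothing by unfold_locales auto
    have coefficient: "2 * (1 + M_A) * \<beta> * exp (real k * \<tau> * \<beta>) \<le> C1 * exp (t * \<beta>)"
      using norms assms \<open>real k * \<tau> \<le> t\<close> unfolding C1_def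
      by (intro mult_mono) (auto intro!: mult_right_mono)
    have "2 * (1 + M_A) * \<beta> * (exp (real k * \<tau> * \<beta>) * norm z) * (1 + ln (real k))
        \<le> C1 * exp (t * \<beta>) * (1 + ln (real k)) * norm z"
      using mult_right_mono[OF coefficient, of "(1 + ln (real k)) * norm z"] k by (simp add: mult_ac)
    then have "norm (diagA A1 A2 ((T ^^ k) z)) \<le> (C1 * exp (t * \<beta>) * (1 + ln (real k)) + M_A / (real k * \<tau>)) * norm z"
      using splitT_pow_smoothing(2)[of k z] k by (simp add: distrib_right)
    then show "let \<tau> = t / real n; w = (splitT S1 S2 B1 B2 \<tau> ^^ k) z in
        w \<in> D1 \<times> D2 \<and>
        norm (diagA A1 A2 w) \<le> (C1 * exp (t * (norm B1 + norm B2)) * (1 + ln (real k)) + M_A / (real k * \<tau>)) * norm z"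
      using splitT_pow_smoothing(1)[of k z] k unfolding Let_def \<tau>_def[symmetric] by simp
  qed
qed

end
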